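(* Let $R$ be a commutative ring in which $2$ is invertible, let $M$ be a quadratic $R$-space, and let $\alpha\in\mathrm{TransO}(M,\langle\,,\,\rangle)$. Then there exists $\beta(X)\in\mathrm{TransO}(M[X],\langle\,,\,\rangle)$ such that $\beta(1)=\alpha$ and $\beta(0)=\mathrm{Id}$.
   Context: A quadratic space is a finitely generated projective module $M$ with quadratic form $q$ whose bilinear form $\langle x,y\rangle=q(x+y)-q(x)-q(y)$ is non-degenerate. $M[X]=M\otimes_RR[X]$ is the quadratic space over $R[X]$ obtained by extension of scalars, and $\beta(c)$ for $c\in R$ denotes the specialization $X\mapsto c$. ESD transvections on a quadratic space $N$ (over any such ring): for $u,v\in N$ with $u$ unimodular, $q(u)=0$, $\langle u,v\rangle=0$, $r=q(v)$, $\sigma_{u,v}(x)=x+\langle v,x\rangle u-\langle u,x\rangle v-r\langle u,x\rangle u$; $\mathrm{TransO}(N,\langle\,,\,\rangle)$ is the group generated by all of them. *)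

theory Defs
  imports Main "HOL-Computational_Algebra.Polynomial"
begin

definition lin_fun :: "('r::comm_ring_1 \<Rightarrow> 'n::ab_group_add \<Rightarrow> 'n) \<Rightarrow> ('n \<Rightarrow> 'r) \<Rightarrow> bool" where
  "lin_fun sc \<phi> \<longleftrightarrow> (\<forall>x y. \<phi> (x + y) = \<phi> x + \<phi> y) \<and> (\<forall>r x. \<phi> (sc r x) = r * \<phi> x)"

definition unimodular :: "('r::comm_ring_1 \<Rightarrow> 'n::ab_group_add \<Rightarrow> 'n) \<Rightarrow> 'n \<Rightarrow> bool" where
  "unimodular sc u \<longleftrightarrow> (\<exists>\<phi>. lin_fun sc \<phi> \<and> \<phi> u = 1)"

text \<open>Finitely generated projective: direct summand of R^n, i.e. there are
  i = (phi_0,...,phi_{n-1}) : M -> R^n and p : R^n -> M, p(e_k) = x_k, with p o i = id.\<close>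
definition fg_projective :: "('r::comm_ring_1 \<Rightarrow> 'n::ab_group_add \<Rightarrow> 'n) \<Rightarrow> bool" where
  "fg_projective sc \<longleftrightarrow> (\<exists>(n::nat) (xs::nat \<Rightarrow> 'n) (\<phi>s::nat \<Rightarrow> 'n \<Rightarrow> 'r).
      (\<forall>k<n. lin_fun sc (\<phi>s k)) \<and> (\<forall>x. x = (\<Sum>k<n. sc (\<phi>s k x) (xs k))))"

definition bil :: "('n::ab_group_add \<Rightarrow> 'r::comm_ring_1) \<Rightarrow> 'n \<Rightarrow> 'n \<Rightarrow> 'r" where
  "bil q x y = q (x + y) - q x - q y"

definition quad_form :: "('r::comm_ring_1 \<Rightarrow> 'n::ab_group_add \<Rightarrow> 'n) \<Rightarrow> ('n \<Rightarrow> 'r) \<Rightarrow> bool" where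
  "quad_form sc q \<longleftrightarrow> (\<forall>r x. q (sc r x) = r\<^sup>2 * q x) \<and> (\<forall>x. lin_fun sc (bil q x))"

definition nondegenerate :: "('r::comm_ring_1 \<Rightarrow> 'n::ab_group_add \<Rightarrow> 'n) \<Rightarrow> ('n \<Rightarrow> 'r) \<Rightarrow> bool" where
  "nondegenerate sc q \<longleftrightarrow> (\<forall>\<phi>. lin_fun sc \<phi> \<longrightarrow> (\<exists>!y. \<phi> = bil q y))"

definition quadratic_space :: "('r::comm_ring_1 \<Rightarrow> 'n::ab_group_add \<Rightarrow> 'n) \<Rightarrow> ('n \<Rightarrow> 'r) \<Rightarrow> bool" where
  "quadratic_space sc q \<longleftrightarrow> module sc \<and> fg_projective sc \<and> quad_form sc q \<and> nondegenerate sc q"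

definition ESD_trans :: "('r::comm_ring_1 \<Rightarrow> 'n::ab_group_add \<Rightarrow> 'n) \<Rightarrow> ('n \<Rightarrow> 'r) \<Rightarrow> 'n \<Rightarrow> 'n \<Rightarrow> 'n \<Rightarrow> 'n" where
  "ESD_trans sc q u v = (\<lambda>x. x + sc (bil q v x) u - sc (bil q u x) v - sc (q v * bil q u x) u)"

definition is_ESD :: "('r::comm_ring_1 \<Rightarrow> 'n::ab_group_add \<Rightarrow> 'n) \<Rightarrow> ('n \<Rightarrow> 'r) \<Rightarrow> ('n \<Rightarrow> 'n) \<Rightarrow> bool" where
  "is_ESD sc q \<sigma> \<longleftrightarrow> (\<exists>u v. unimodular sc u \<and> q u = 0 \<and> bil q u v = 0 \<and> \<sigma> = ESD_trans sc q u v)"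

text \<open>The group generated by the ESD transvections (each is bijective).\<close>
inductive_set TransO :: "('r::comm_ring_1 \<Rightarrow> 'n::ab_group_add \<Rightarrow> 'n) \<Rightarrow> ('n \<Rightarrow> 'r) \<Rightarrow> ('n \<Rightarrow> 'n) set"
  for sc q where
  TransO_id: "id \<in> TransO sc q"
| TransO_comp: "g \<in> TransO sc q \<Longrightarrow> is_ESD sc q \<sigma> \<Longrightarrow> \<sigma> \<circ> g \<in> TransO sc q"
| TransO_inv: "g \<in> TransO sc q \<Longrightarrow> is_ESD sc q \<sigma> \<Longrightarrow> inv \<sigma> \<circ> g \<in> TransO sc q"

text \<open>M[X] = M \<otimes> R[X] is modelled as polynomials with coefficients in M.\<close>
definition pscale :: "('r::comm_ring_1 \<Rightarrow> 'n::ab_group_add \<Rightarrow> 'n) \<Rightarrow> 'r poly \<Rightarrow> 'n poly \<Rightarrow> 'n poly" where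
  "pscale sc p f = (\<Sum>i\<le>degree p. \<Sum>j\<le>degree f. monom (sc (coeff p i) (coeff f j)) (i + j))"

definition polyq :: "('n::ab_group_add \<Rightarrow> 'r::comm_ring_1) \<Rightarrow> 'n poly \<Rightarrow> 'r poly" where
  "polyq q f = (\<Sum>i\<le>degree f. monom (q (coeff f i)) (2 * i))
     + (\<Sum>j\<le>degree f. \<Sum>i<j. monom (bil q (coeff f i) (coeff f j)) (i + j))"

definition peval :: "('r::comm_ring_1 \<Rightarrow> 'n::ab_group_add \<Rightarrow> 'n) \<Rightarrow> 'r \<Rightarrow> 'n poly \<Rightarrow> 'n" where
  "peval sc c f = (\<Sum>i\<le>degree f. sc (c ^ i) (coeff f i))"

definition spec :: "('r::comm_ring_1 \<Rightarrow> 'n::ab_group_add \<Rightarrow> 'n) \<Rightarrow> ('n poly \<Rightarrow> 'n poly) \<Rightarrow> 'r \<Rightarrow> 'n \<Rightarrow> 'n" where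
  "spec sc \<beta> c = (\<lambda>x. peval sc c (\<beta> [:x:]))"

end

theory Submission
  imports Defs
begin

text \<open>Write \<open>\<alpha>\<close> as a product of ESD transvections \<open>\<sigma>\<^bsub>u,v\<^esub>\<close> and their inverses,
  where \<open>\<sigma>\<^bsub>u,v\<^esub>\<^sup>-\<^sup>1 = \<sigma>\<^bsub>u,-v\<^esub>\<close>. Over \<open>R[X]\<close> the pair \<open>(u, X v)\<close> still satisfies
  \<open>q(u) = 0\<close> and \<open>\<langle>u, X v\<rangle> = 0\<close>, so \<open>\<sigma>\<^bsub>u,Xv\<^esub>\<close> is an ESD transvection of \<open>M[X]\<close>.
  Specialisation \<open>X \<mapsto> c\<close> is compatible with the quadratic form, hence turns \<open>\<sigma>\<^bsub>u,Xv\<^esub>\<close>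
  into \<open>\<sigma>\<^bsub>u,cv\<^esub>\<close>: this is \<open>\<sigma>\<^bsub>u,v\<^esub>\<close> for \<open>c = 1\<close> and the identity for \<open>c = 0\<close>.
  Replacing every factor by its lift gives \<open>\<beta>\<close>.\<close>

lemma additive_lin_fun: "lin_fun sc \<phi> \<Longrightarrow> additive \<phi>"
  unfolding lin_fun_def by unfold_locales auto

definition sum_coeffs :: "(nat \<Rightarrow> 'n \<Rightarrow> 'b) \<Rightarrow> 'n::zero poly \<Rightarrow> 'b::comm_monoid_add" where
  "sum_coeffs g f = (\<Sum>i\<le>degree f. g i (coeff f i))"

lemma sum_coeffs_eq_sum_atMost:
  assumes "\<And>i. g i 0 = 0" "degree f \<le> N"
  shows "sum_coeffs g f = (\<Sum>i\<le>N. g i (coeff f i))"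
  unfolding sum_coeffs_def using assms(2)
  by (intro sum.mono_neutral_left) (auto simp: assms(1) coeff_eq_0)

lemma additive_sum_coeffs:
  assumes "\<And>i. additive (g i)"
  shows "additive (sum_coeffs g)"
proof
  fix f h :: "'a poly"
  define N where "N = max (degree f) (degree h)"
  have deg: "degree f \<le> N" "degree h \<le> N" "degree (f + h) \<le> N"
    unfolding N_def using degree_add_le_max[of f h] by auto
  have zero: "g i 0 = 0" for i
    using additive.zero[OF assms] .
  show "sum_coeffs g (f + h) = sum_coeffs g f + sum_coeffs g h"
    unfolding sum_coeffs_eq_sum_atMost[of g, OF zero deg(1)]
      sum_coeffs_eq_sum_atMost[of g, OF zero deg(2)] sum_coeffs_eq_sum_atMost[of g, OF zero deg(3)]
    by (simp add: additive.add[OF assms] sum.distrib)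
qed

lemma sum_coeffs_monom:
  assumes "\<And>i. g i 0 = 0"
  shows "sum_coeffs g (monom a n) = g n a"
proof -
  have "sum_coeffs g (monom a n) = (\<Sum>i\<le>n. g i (coeff (monom a n) i))"
    by (rule sum_coeffs_eq_sum_atMost[of g, OF assms]) (simp add: degree_monom_le)
  also have "\<dots> = (\<Sum>i\<le>n. if i = n then g n a else 0)"
    by (intro sum.cong) (auto simp: coeff_monom assms)
  finally show ?thesis by simp
qed

lemma peval_eq_sum_coeffs: "peval sc c = sum_coeffs (\<lambda>i. sc (c ^ i))"
  unfolding peval_def sum_coeffs_def by (rule ext) simp

lemma lin_fun_lift_poly:
  assumes "lin_fun sc \<phi>"
  shows "lin_fun (pscale sc) (sum_coeffs (\<lambda>i x. monom (\<phi> x) i))"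
proof -
  let ?g = "\<lambda>i x. monom (\<phi> x) i"
  have add: "additive (?g i)" for i
    using additive_lin_fun[OF assms] by unfold_locales (simp add: additive.add add_monom)
  have zero: "?g i 0 = 0" for i
    using additive.zero[OF add] .
  have "sum_coeffs ?g (pscale sc p f) = p * sum_coeffs ?g f" for p f
  proof -
    have "sum_coeffs ?g (pscale sc p f)
        = (\<Sum>i\<le>degree p. \<Sum>j\<le>degree f. monom (coeff p i * \<phi> (coeff f j)) (i + j))"
      unfolding pscale_def using assms
      by (simp add: additive.sum[OF additive_sum_coeffs[OF add]] sum_coeffs_monom[of ?g, OF zero] lin_fun_def)
    also have "\<dots> = (\<Sum>i\<le>degree p. monom (coeff p i) i) * sum_coeffs ?g f"
      unfolding sum_coeffs_def
      by (simp add: sum_distrib_left sum_distrib_right mult_monom sum.swap[of _ "{..degree f}"])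
    also have "\<dots> = p * sum_coeffs ?g f"
      by (simp add: poly_as_sum_of_monoms)
    finally show ?thesis .
  qed
  with additive.add[OF additive_sum_coeffs[of ?g, OF add]] show ?thesis
    unfolding lin_fun_def by blast
qed

lemma unimodular_const_poly:
  assumes "unimodular sc u"
  shows "unimodular (pscale sc) [:u:]"
proof -
  obtain \<phi> where "lin_fun sc \<phi>" "\<phi> u = 1"
    using assms unfolding unimodular_def by auto
  moreover have "sum_coeffs (\<lambda>i x. monom (\<phi> x) i) [:u:] = monom (\<phi> u) 0"
    unfolding sum_coeffs_def by simp
  ultimately show ?thesis
    unfolding unimodular_def using lin_fun_lift_poly by (metis one_poly_eq_simps(1) monom_0)
qed

locale quadratic_module = module sc for sc :: "'a::comm_ring_1 \<Rightarrow> 'm::ab_group_add \<Rightarrow> 'm" +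
  fixes q :: "'m \<Rightarrow> 'a"
  assumes quad_form: "quad_form sc q"
begin

lemma q_scale: "q (sc r x) = r\<^sup>2 * q x"
  using quad_form unfolding quad_form_def by auto

lemma lin_fun_bil: "lin_fun sc (bil q x)"
  using quad_form unfolding quad_form_def by auto

lemma bil_commute: "bil q x y = bil q y x"
  unfolding bil_def by (simp add: add.commute algebra_simps)

lemma additive_bil_right: "additive (bil q x)"
  by (rule additive_lin_fun[OF lin_fun_bil])

lemma additive_bil_left: "additive (\<lambda>y. bil q y x)"
  by unfold_locales (simp add: bil_commute[of _ x] additive.add[OF additive_bil_right])

lemma bil_scale_right: "bil q x (sc r y) = r * bil q x y"
  using lin_fun_bil unfolding lin_fun_def by auto

lemma bil_scale_left: "bil q (sc r y) x = r * bil q y x"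
  by (simp add: bil_commute[of _ x] bil_scale_right)

lemmas bil_add_right = additive.add[OF additive_bil_right]
  and bil_minus_right = additive.minus[OF additive_bil_right]
  and bil_minus_left = additive.minus[OF additive_bil_left]
  and bil_diff_right = additive.diff[OF additive_bil_right]
  and bil_zero_right = additive.zero[OF additive_bil_right]
  and bil_zero_left = additive.zero[OF additive_bil_left]

lemma q_zero: "q 0 = 0"
  using q_scale[of 0 0] by simp

lemma q_minus: "q (- x) = q x"
  using q_scale[of "-1" x] by simp

lemma bil_self: "bil q x x = 2 * q x"
proof -
  have "q (x + x) = q (sc 2 x)"
    using scale_left_distrib[of 1 1 x] by simp
  then show ?thesis
    unfolding bil_def q_scale by (simp add: algebra_simps power2_eq_square)
qed

lemma q_add: "q (x + y) = q x + q y + bil q x y"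
  unfolding bil_def by simp

lemma q_sum:
  fixes n :: nat
  shows "q (\<Sum>i<n. x i) = (\<Sum>i<n. q (x i)) + (\<Sum>j<n. \<Sum>i<j. bil q (x i) (x j))"
proof (induction n)
  case 0
  show ?case by (simp add: q_zero)
next
  case (Suc n)
  have "bil q (\<Sum>i<n. x i) (x n) = (\<Sum>i<n. bil q (x i) (x n))"
    by (rule additive.sum[OF additive_bil_left])
  with Suc show ?case
    by (simp add: q_add bil_commute[of "x n"] algebra_simps)
qed

lemma ESD_trans_minus_cancel:
  assumes "q u = 0" "bil q u v = 0"
  shows "ESD_trans sc q u v (ESD_trans sc q u (- v) x) = x"
proof -
  define y where "y = ESD_trans sc q u (- v) x"
  have y: "y = x - sc (bil q v x) u + sc (bil q u x) v - sc (q v * bil q u x) u"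
    unfolding y_def ESD_trans_def by (simp add: bil_minus_left q_minus)
  have "bil q u u = 0"
    using bil_self assms by simp
  then have bil_y: "bil q u y = bil q u x" "bil q v y = bil q v x + 2 * q v * bil q u x"
    unfolding y using assms
    by (simp_all add: bil_diff_right bil_add_right bil_scale_right bil_self
        bil_commute[of v u] algebra_simps)
  have twice: "sc (bil q v x + 2 * q v * bil q u x) u
      = sc (bil q v x) u + sc (q v * bil q u x) u + sc (q v * bil q u x) u"
    by (simp only: mult_2 distrib_right scale_left_distrib add.assoc)
  show ?thesis
    unfolding y_def[symmetric] unfolding ESD_trans_def bil_y twice
    by (simp add: y algebra_simps)
qed

lemma inv_ESD_trans:
  assumes "q u = 0" "bil q u v = 0"
  shows "inv (ESD_trans sc q u v) = ESD_trans sc q u (- v)"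
proof (rule inv_equality)
  show "ESD_trans sc q u (- v) (ESD_trans sc q u v x) = x" for x
    using ESD_trans_minus_cancel[of u "- v"] assms by (simp add: bil_minus_right)
  show "ESD_trans sc q u v (ESD_trans sc q u (- v) y) = y" for y
    using ESD_trans_minus_cancel assms by simp
qed

lemma is_ESD_inv: "is_ESD sc q \<sigma> \<Longrightarrow> is_ESD sc q (inv \<sigma>)"
  unfolding is_ESD_def by (metis inv_ESD_trans bil_minus_right neg_equal_0_iff_equal)

lemma additive_peval: "additive (peval sc c)"
  unfolding peval_eq_sum_coeffs
  by (intro additive_sum_coeffs) (unfold_locales, rule scale_right_distrib)

lemmas peval_add = additive.add[OF additive_peval]
  and peval_diff = additive.diff[OF additive_peval]
  and peval_sum = additive.sum[OF additive_peval]

lemma peval_monom: "peval sc c (monom a n) = sc (c ^ n) a"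
  unfolding peval_eq_sum_coeffs by (rule sum_coeffs_monom) simp

lemma peval_const: "peval sc c [:x:] = x"
  unfolding peval_def by simp

lemma spec_id: "spec sc id c = id"
  unfolding spec_def by (simp add: peval_const id_def)

lemma peval_pscale: "peval sc c (pscale sc p f) = sc (poly p c) (peval sc c f)"
proof -
  have "peval sc c (pscale sc p f) =
     (\<Sum>i\<le>degree p. \<Sum>j\<le>degree f. sc (c ^ (i + j)) (sc (coeff p i) (coeff f j)))"
    unfolding pscale_def by (simp add: peval_sum peval_monom)
  also have "\<dots> = (\<Sum>i\<le>degree p. \<Sum>j\<le>degree f. sc (coeff p i * c ^ i) (sc (c ^ j) (coeff f j)))"
    by (intro sum.cong refl) (simp add: power_add mult_ac)
  also have "\<dots> = (\<Sum>i\<le>degree p. sc (coeff p i * c ^ i) (\<Sum>j\<le>degree f. sc (c ^ j) (coeff f j)))"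
    by (simp only: scale_sum_right)
  also have "\<dots> = sc (poly p c) (peval sc c f)"
    unfolding poly_altdef peval_def by (simp only: scale_sum_left)
  finally show ?thesis .
qed

lemma poly_polyq: "poly (polyq q f) c = q (peval sc c f)"
proof -
  let ?x = "\<lambda>i. sc (c ^ i) (coeff f i)"
  have "q (peval sc c f) = q (\<Sum>i<Suc (degree f). ?x i)"
    unfolding peval_def lessThan_Suc_atMost ..
  also have "\<dots> = (\<Sum>i<Suc (degree f). q (?x i)) + (\<Sum>j<Suc (degree f). \<Sum>i<j. bil q (?x i) (?x j))"
    by (rule q_sum)
  also have "\<dots> = (\<Sum>i\<le>degree f. q (coeff f i) * c ^ (2 * i))
      + (\<Sum>j\<le>degree f. \<Sum>i<j. bil q (coeff f i) (coeff f j) * c ^ (i + j))"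
    unfolding lessThan_Suc_atMost
    by (simp add: q_scale bil_scale_left bil_scale_right power_add power_mult mult_ac)
  also have "\<dots> = poly (polyq q f) c"
    unfolding polyq_def by (simp add: poly_sum poly_monom)
  finally show ?thesis ..
qed

lemma poly_bil_polyq: "poly (bil (polyq q) f g) c = bil q (peval sc c f) (peval sc c g)"
  unfolding bil_def by (simp add: poly_polyq peval_add)

lemma peval_ESD_trans:
  "peval sc c (ESD_trans (pscale sc) (polyq q) U V f)
     = ESD_trans sc q (peval sc c U) (peval sc c V) (peval sc c f)"
  unfolding ESD_trans_def
  by (simp add: peval_add peval_diff peval_pscale poly_bil_polyq poly_polyq)

lemma spec_ESD_trans_comp:
  "spec sc (ESD_trans (pscale sc) (polyq q) U V \<circ> \<beta>) c
     = ESD_trans sc q (peval sc c U) (peval sc c V) \<circ> spec sc \<beta> c"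
  unfolding spec_def by (simp add: comp_def peval_ESD_trans)

lemma polyq_eq_sum_atMost:
  assumes "degree f \<le> N"
  shows "polyq q f = (\<Sum>i\<le>N. monom (q (coeff f i)) (2 * i))
     + (\<Sum>j\<le>N. \<Sum>i<j. monom (bil q (coeff f i) (coeff f j)) (i + j))"
  unfolding polyq_def using assms
  by (intro arg_cong2[where f = "(+)"] sum.mono_neutral_left)
     (auto simp: q_zero bil_zero_left bil_zero_right coeff_eq_0)

lemma polyq_const: "polyq q [:u:] = [:q u:]"
  by (subst polyq_eq_sum_atMost[of _ 0]) (simp_all add: monom_0)

lemma bil_polyq_const_monom: "bil (polyq q) [:u:] (monom v 1) = monom (bil q u v) 1"
proof -
  have "degree ([:u:] + monom v 1) \<le> 1" "degree (monom v 1) \<le> 1" "degree [:u:] \<le> 1"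
    by (auto intro: order.trans[OF degree_add_le] simp: degree_monom_le)
  note expand = this[THEN polyq_eq_sum_atMost]
  show ?thesis
    unfolding bil_def expand
    by (simp add: q_zero bil_zero_left bil_zero_right monom_0 numeral_2_eq_2)
qed

lemma is_ESD_lift:
  assumes "unimodular sc u" "q u = 0" "bil q u v = 0"
  shows "is_ESD (pscale sc) (polyq q) (ESD_trans (pscale sc) (polyq q) [:u:] (monom v 1))"
proof -
  have "unimodular (pscale sc) [:u:]" "polyq q [:u:] = 0" "bil (polyq q) [:u:] (monom v 1) = 0"
    using unimodular_const_poly[OF assms(1)]
    by (simp_all only: polyq_const bil_polyq_const_monom assms(2,3) pCons_0_0 monom_eq_0)
  then show ?thesis
    unfolding is_ESD_def by blast
qed

lemma TransO_lift_ESD_comp: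
  assumes "is_ESD sc q \<sigma>" "\<beta> \<in> TransO (pscale sc) (polyq q)"
  shows "\<exists>\<beta>' \<in> TransO (pscale sc) (polyq q).
           spec sc \<beta>' 1 = \<sigma> \<circ> spec sc \<beta> 1 \<and> spec sc \<beta>' 0 = spec sc \<beta> 0"
proof -
  obtain u v where uv: "unimodular sc u" "q u = 0" "bil q u v = 0" "\<sigma> = ESD_trans sc q u v"
    using assms(1) unfolding is_ESD_def by blast
  let ?T = "ESD_trans (pscale sc) (polyq q) [:u:] (monom v 1)"
  have "?T \<circ> \<beta> \<in> TransO (pscale sc) (polyq q)"
    using TransO.TransO_comp[OF assms(2) is_ESD_lift[OF uv(1-3)]] .
  moreover have "spec sc (?T \<circ> \<beta>) c = ESD_trans sc q u (sc c v) \<circ> spec sc \<beta> c" for c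
    by (simp add: spec_ESD_trans_comp peval_const peval_monom)
  moreover have "ESD_trans sc q u 0 = id"
    unfolding ESD_trans_def by (simp add: bil_zero_left q_zero id_def)
  ultimately show ?thesis
    using uv(4) by (metis id_comp scale_one scale_zero_left)
qed

end

theorem mainTheorem16:
  fixes sc :: "'a::comm_ring_1 \<Rightarrow> 'm::ab_group_add \<Rightarrow> 'm"
    and q :: "'m \<Rightarrow> 'a"
    and \<alpha> :: "'m \<Rightarrow> 'm"
  assumes "\<exists>h::'a. 2 * h = 1"
    and "quadratic_space sc q"
    and "\<alpha> \<in> TransO sc q"
  shows "\<exists>\<beta> \<in> TransO (pscale sc) (polyq q). spec sc \<beta> 1 = \<alpha> \<and> spec sc \<beta> 0 = id"
proof -
  interpret quadratic_module sc q
    using assms(2) unfolding quadratic_space_def quadratic_module_def quadratic_module_axioms_def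
    by blast
  from assms(3) show ?thesis
  proof (induction rule: TransO.induct)
    case TransO_id
    show ?case using TransO.TransO_id spec_id by blast
  next
    case TransO_comp
    then show ?case using TransO_lift_ESD_comp by metis
  next
    case TransO_inv
    then show ?case using TransO_lift_ESD_comp is_ESD_inv by metis
  qed
qed

end
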